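(* Let $\mathcal{N}$ be a cactus network. Then every nonempty set of vertices of $\mathcal{N}$ has a unique lowest common ancestor.
   Context: A cactus network is a finite directed acyclic graph $\mathcal{N}$ with a unique vertex of indegree $0$ (the root) such that in its underlying undirected graph $\mathcal{N}^\star$ every edge belongs to at most one simple cycle. For vertices $u,v$, $u\succcurlyeq v$ ($u$ is an ancestor of $v$) means there is a directed path from $u$ to $v$ (possibly of length $0$), and $u\succ v$ means $u\succcurlyeq v$ and $u\ne v$. A lowest common ancestor of a set $V$ of vertices is a vertex $u$ with $u\succcurlyeq v$ for all $v\in V$ such that there is no vertex $u'$ with $u\succ u'$ and $u'\succcurlyeq v$ for all $v\in V$. *)

theory Defs
  imports Main
begin

definition uadj :: "('a \<times> 'a) set \<Rightarrow> 'a \<Rightarrow> 'a \<Rightarrow> bool" where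
  "uadj E u v \<longleftrightarrow> (u, v) \<in> E \<or> (v, u) \<in> E"

definition simple_cycle :: "('a \<times> 'a) set \<Rightarrow> 'a list \<Rightarrow> bool" where
  "simple_cycle E cs \<longleftrightarrow> length cs \<ge> 3 \<and> distinct cs \<and>
     (\<forall>i < length cs. uadj E (cs ! i) (cs ! ((i + 1) mod length cs)))"

definition cycle_edges :: "'a list \<Rightarrow> 'a set set" where
  "cycle_edges cs = {{cs ! i, cs ! ((i + 1) mod length cs)} | i. i < length cs}"

definition cactus_network :: "'a set \<Rightarrow> ('a \<times> 'a) set \<Rightarrow> bool" where
  "cactus_network V E \<longleftrightarrow>
     finite V \<and> E \<subseteq> V \<times> V \<and> acyclic E \<and>
     (\<exists>!r. r \<in> V \<and> (\<nexists>x. (x, r) \<in> E)) \<and>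
     (\<forall>e c1 c2. simple_cycle E c1 \<and> simple_cycle E c2 \<and>
        e \<in> cycle_edges c1 \<and> e \<in> cycle_edges c2 \<longrightarrow> cycle_edges c1 = cycle_edges c2)"

definition is_lca :: "'a set \<Rightarrow> ('a \<times> 'a) set \<Rightarrow> 'a set \<Rightarrow> 'a \<Rightarrow> bool" where
  "is_lca V E S u \<longleftrightarrow> u \<in> V \<and> (\<forall>v \<in> S. (u, v) \<in> E\<^sup>*) \<and>
     \<not> (\<exists>u'. (u, u') \<in> E\<^sup>* \<and> u \<noteq> u' \<and> (\<forall>v \<in> S. (u', v) \<in> E\<^sup>*))"

end

theory Submission
  imports Defs
begin

text \<open>A lowest common ancestor exists because the graph is finite and acyclic and the root is a
  common ancestor: take a deepest common ancestor. For uniqueness, two distinct lowest common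
  ancestors \<open>u\<^sub>1, u\<^sub>2\<close> are incomparable. Let \<open>w\<close> be a deepest common ancestor of \<open>u\<^sub>1\<close> and
  \<open>u\<^sub>2\<close>; then paths \<open>w \<leadsto> u\<^sub>1\<close> and \<open>w \<leadsto> u\<^sub>2\<close> meet only in \<open>w\<close>. For any \<open>s \<in> S\<close>, paths
  \<open>u\<^sub>1 \<leadsto> s\<close> and \<open>u\<^sub>2 \<leadsto> s\<close> first meet in some \<open>z\<close>, and the four paths close up to a simple
  cycle through the first edge of \<open>w \<leadsto> u\<^sub>1\<close>, each of whose vertices is an ancestor of \<open>u\<^sub>1\<close>,
  \<open>u\<^sub>2\<close> or \<open>s\<close>. Since \<open>z\<close> lies strictly below \<open>u\<^sub>1\<close>, some \<open>s' \<in> S\<close> is not below \<open>z\<close>; the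
  cycle built for \<open>s'\<close> shares an edge with the first one, so by the cactus condition it has the
  same vertices, yet it cannot contain \<open>z\<close>.\<close>

abbreviation dwalk :: "('a \<times> 'a) set \<Rightarrow> 'a list \<Rightarrow> bool" where
  "dwalk E \<equiv> successively (\<lambda>x y. (x, y) \<in> E)"

lemma dwalk_imp_uwalk:
  assumes "dwalk E xs"
  shows "successively (uadj E) xs" "successively (uadj E) (rev xs)"
  using assms by (auto simp: uadj_def elim: successively_mono)

lemma dwalk_hd_rtrancl:
  "dwalk E xs \<Longrightarrow> x \<in> set xs \<Longrightarrow> (hd xs, x) \<in> E\<^sup>*"
  by (induction xs) (auto simp: successively_Cons intro: converse_rtrancl_into_rtrancl)

lemma dwalk_rtrancl_last:
  assumes "dwalk E xs" "x \<in> set xs"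
  shows "(x, last xs) \<in> E\<^sup>*"
proof -
  have "dwalk (E\<inverse>) (rev xs)" using assms(1) by simp
  then have "(hd (rev xs), x) \<in> (E\<inverse>)\<^sup>*" using assms(2) dwalk_hd_rtrancl by fastforce
  then show ?thesis using assms(2) by (auto simp: hd_rev rtrancl_converse)
qed

lemma dwalk_Cons_trancl:
  "dwalk E (x # xs) \<Longrightarrow> y \<in> set xs \<Longrightarrow> (x, y) \<in> E\<^sup>+"
  by (cases xs) (auto simp: successively_Cons dest: dwalk_hd_rtrancl intro: rtrancl_into_trancl2)

lemma successively_glue:
  "successively P (xs @ [y]) \<Longrightarrow> successively P (y # ys) \<Longrightarrow> successively P (xs @ y # ys)"
  by (cases xs rule: rev_cases) (auto simp: successively_append_iff)

lemma acyclic_dwalk_distinct: "acyclic E \<Longrightarrow> dwalk E xs \<Longrightarrow> distinct xs"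
proof (induction xs)
  case (Cons x xs)
  then show ?case
    using dwalk_Cons_trancl[OF Cons.prems(2)] by (auto simp: successively_Cons acyclic_def)
qed simp

lemma trancl_dwalkE:
  assumes "(u, v) \<in> E\<^sup>+"
  obtains xs where "dwalk E (u # xs @ [v])"
  using assms
proof (induction arbitrary: thesis rule: trancl_induct)
  case (base v)
  then show ?case by (intro base.prems[of "[]"]) simp
next
  case (step y z)
  then obtain xs where "dwalk E (u # xs @ [y])" by blast
  with step.hyps(2) have "dwalk E ((u # xs @ [y]) @ [z])"
    by (simp only: successively_append_iff) simp
  then show ?case by (intro step.prems[of "xs @ [y]"]) simp
qed

lemma finite_acyclic_deepestE:
  assumes "finite E" "acyclic E" "x \<in> C"
  obtains m where "m \<in> C" "\<And>y. (m, y) \<in> E\<^sup>+ \<Longrightarrow> y \<notin> C"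
proof -
  have "wf ((E\<^sup>+)\<inverse>)"
    using assms(1,2) by (intro wf_converse_trancl finite_acyclic_wf) auto
  from wfE_min[OF this assms(3)] show ?thesis by (metis that converse_iff)
qed

lemma unique_source_rtrancl:
  assumes "wf E" "E \<subseteq> V \<times> V" "v \<in> V"
    and source: "\<And>x. x \<in> V \<Longrightarrow> \<nexists>y. (y, x) \<in> E \<Longrightarrow> x = r"
  shows "(r, v) \<in> E\<^sup>*"
  using assms(1,3)
proof (induction v rule: wf_induct_rule)
  case (less v)
  show ?case
  proof (cases "\<exists>y. (y, v) \<in> E")
    case True
    then obtain y where "(y, v) \<in> E" by blast
    moreover from this have "(r, y) \<in> E\<^sup>*" using less assms(2) by blast
    ultimately show ?thesis by (rule rtrancl_into_rtrancl[rotated])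
  qed (use source less in auto)
qed

lemma simple_cycleI:
  assumes "3 \<le> length cs" "distinct cs" "successively (uadj E) (cs @ [hd cs])"
  shows "simple_cycle E cs"
  unfolding simple_cycle_def
proof (intro conjI allI impI)
  fix i assume i: "i < length cs"
  have "uadj E ((cs @ [hd cs]) ! i) ((cs @ [hd cs]) ! Suc i)"
    using successively_nth[OF assms(3)] i by simp
  moreover have "(cs @ [hd cs]) ! Suc i = cs ! ((i + 1) mod length cs)"
  proof (cases "Suc i < length cs")
    case False
    then have "Suc i = length cs" using i by simp
    moreover have "cs \<noteq> []" using i by auto
    ultimately show ?thesis by (simp add: nth_append hd_conv_nth)
  qed (simp add: nth_append)
  ultimately show "uadj E (cs ! i) (cs ! ((i + 1) mod length cs))"
    using i by (simp add: nth_append)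
qed (use assms in auto)

lemma Union_cycle_edges: "\<Union>(cycle_edges cs) = set cs"
  unfolding cycle_edges_def
  by (auto simp: in_set_conv_nth) (metis mod_less_divisor length_pos_if_in_set nth_mem, blast)

lemma dwalks_simple_cycle:
  assumes "dwalk E (w # X @ [z])" "dwalk E (w # Y @ [z])"
    and "distinct (w # z # X @ Y)" "X \<noteq> []"
  shows "simple_cycle E (w # X @ z # rev Y)" "{w, hd X} \<in> cycle_edges (w # X @ z # rev Y)"
proof -
  let ?cs = "w # X @ z # rev Y"
  have W1: "successively (uadj E) (w # X @ [z])"
    using assms(1) by (rule dwalk_imp_uwalk)
  have W2: "successively (uadj E) (z # rev Y @ [w])"
    using dwalk_imp_uwalk(2)[OF assms(2)] by simp
  have "successively (uadj E) (w # X)" "uadj E (last (w # X)) z"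
    using W1 successively_append_iff[of _ "w # X" "[z]"] by simp_all
  with W2 have "successively (uadj E) ((w # X) @ (z # rev Y @ [w]))"
    by (simp only: successively_append_iff) simp
  then show "simple_cycle E ?cs"
    using assms(3,4) by (intro simple_cycleI) (auto simp: Suc_le_eq)
  have "{?cs ! 0, ?cs ! ((0 + 1) mod length ?cs)} \<in> cycle_edges ?cs"
    unfolding cycle_edges_def by blast
  then show "{w, hd X} \<in> cycle_edges ?cs"
    using assms(4) by (cases X) auto
qed

lemma incomparable_first_common_descendantE:
  assumes "(u1, s) \<in> E\<^sup>*" "(u2, s) \<in> E\<^sup>*" "(u1, u2) \<notin> E\<^sup>*" "(u2, u1) \<notin> E\<^sup>*"
  obtains A1 A2 z where "dwalk E (u1 # A1 @ [z])" "dwalk E (u2 # A2 @ [z])"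
    "set (u1 # A1) \<inter> set (u2 # A2 @ [z]) = {}" "(z, s) \<in> E\<^sup>*"
proof -
  have "(u1, s) \<in> E\<^sup>+" "(u2, s) \<in> E\<^sup>+"
    using assms by (auto simp: rtrancl_eq_or_trancl)
  then obtain P1 P2 where P1: "dwalk E (u1 # P1 @ [s])" and P2: "dwalk E (u2 # P2 @ [s])"
    by (elim trancl_dwalkE)
  let ?P1 = "u1 # P1 @ [s]" and ?P2 = "u2 # P2 @ [s]"
  have "\<exists>x\<in>set ?P1. x \<in> set ?P2" by simp
  then obtain B1 z C1 where split1: "?P1 = B1 @ z # C1" "z \<in> set ?P2" "\<forall>y\<in>set B1. y \<notin> set ?P2"
    by (rule split_list_first_propE)
  obtain B2 C2 where split2: "?P2 = B2 @ z # C2" using split_list[OF split1(2)] by blast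
  have "u1 \<notin> set ?P2" using dwalk_hd_rtrancl[OF P2] assms(4) by fastforce
  then obtain A1 where B1: "B1 = u1 # A1"
    using split1 by (cases B1) auto
  have z: "z \<in> set ?P1" using split1(1) by simp
  have "(u1, z) \<in> E\<^sup>*" using dwalk_hd_rtrancl[OF P1 z] by simp
  then have "z \<noteq> u2" using assms(3) by blast
  then obtain A2 where B2: "B2 = u2 # A2"
    using split2 by (cases B2) auto
  show ?thesis
  proof
    have "dwalk E ((u1 # A1 @ [z]) @ C1)" using P1 unfolding split1(1) B1 by simp
    then show "dwalk E (u1 # A1 @ [z])" unfolding successively_append_iff by blast
    have "dwalk E ((u2 # A2 @ [z]) @ C2)" using P2 unfolding split2 B2 by simp
    then show "dwalk E (u2 # A2 @ [z])" unfolding successively_append_iff by blast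
    show "set (u1 # A1) \<inter> set (u2 # A2 @ [z]) = {}"
      using split1(2,3) unfolding split2 B1 B2 by auto
    show "(z, s) \<in> E\<^sup>*"
      using dwalk_rtrancl_last[OF P1 z] by simp
  qed
qed

lemma acyclic_incomparable_simple_cycleE:
  assumes acyc: "acyclic E"
    and Q1: "dwalk E (w # R1 @ [u1])" and Q2: "dwalk E (w # R2 @ [u2])"
    and disj: "set (w # R1) \<inter> set (R2 @ [u2]) = {}"
    and inc: "(u1, u2) \<notin> E\<^sup>*" "(u2, u1) \<notin> E\<^sup>*"
    and s: "(u1, s) \<in> E\<^sup>*" "(u2, s) \<in> E\<^sup>*"
  obtains cs z where "simple_cycle E cs" "{w, hd (R1 @ [u1])} \<in> cycle_edges cs"
    "z \<in> set cs" "(u1, z) \<in> E\<^sup>+"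
    "\<forall>x\<in>set cs. (x, u1) \<in> E\<^sup>* \<or> (x, u2) \<in> E\<^sup>* \<or> (x, s) \<in> E\<^sup>*"
proof -
  obtain A1 A2 z where A1: "dwalk E (u1 # A1 @ [z])" and A2: "dwalk E (u2 # A2 @ [z])"
    and disjA: "set (u1 # A1) \<inter> set (u2 # A2 @ [z]) = {}" and zs: "(z, s) \<in> E\<^sup>*"
    by (rule incomparable_first_common_descendantE[OF s inc])
  \<comment> \<open>the cycle runs \<open>w \<leadsto> u\<^sub>1 \<leadsto> z\<close> along \<open>X\<close> and back \<open>z \<leadsto> u\<^sub>2 \<leadsto> w\<close> along \<open>Y\<close> reversed\<close>
  define X where "X = R1 @ u1 # A1"
  define Y where "Y = R2 @ u2 # A2"
  have D1: "dwalk E (w # X @ [z])"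
    using successively_glue[of _ "w # R1" u1 "A1 @ [z]"] Q1 A1 by (simp add: X_def)
  have D2: "dwalk E (w # Y @ [z])"
    using successively_glue[of _ "w # R2" u2 "A2 @ [z]"] Q2 A2 by (simp add: Y_def)
  have R1_u1: "(x, u1) \<in> E\<^sup>*" if "x \<in> set (w # R1)" for x
    using dwalk_rtrancl_last[OF Q1, of x] that by auto
  have R2_u2: "(x, u2) \<in> E\<^sup>*" if "x \<in> set R2" for x
    using dwalk_rtrancl_last[OF Q2, of x] that by auto
  have A1_s: "(u1, x) \<in> E\<^sup>* \<and> (x, s) \<in> E\<^sup>*" if "x \<in> set (u1 # A1 @ [z])" for x
    using dwalk_hd_rtrancl[OF A1 that] dwalk_rtrancl_last[OF A1 that] zs by auto
  have A2_s: "(u2, x) \<in> E\<^sup>* \<and> (x, s) \<in> E\<^sup>*" if "x \<in> set (u2 # A2 @ [z])" for x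
    using dwalk_hd_rtrancl[OF A2 that] dwalk_rtrancl_last[OF A2 that] zs by auto
  have "set X \<inter> set Y = {}"
  proof -
    have "x \<notin> set (u2 # A2)" if "x \<in> set R1" for x
      using R1_u1[of x] A2_s[of x] inc(2) that by simp (meson rtrancl_trans)
    moreover have "x \<notin> set R2" if "x \<in> set (u1 # A1)" for x
      using R2_u2[of x] A1_s[of x] inc(1) that by simp (meson rtrancl_trans)
    ultimately show ?thesis using disj disjA unfolding X_def Y_def by auto
  qed
  then have "distinct (w # z # X @ Y)"
    using acyclic_dwalk_distinct[OF acyc D1] acyclic_dwalk_distinct[OF acyc D2] by auto
  then have cycle: "simple_cycle E (w # X @ z # rev Y)" "{w, hd X} \<in> cycle_edges (w # X @ z # rev Y)"
    using dwalks_simple_cycle[OF D1 D2] by (auto simp: X_def)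
  show ?thesis
  proof (rule that[OF cycle(1)])
    show "{w, hd (R1 @ [u1])} \<in> cycle_edges (w # X @ z # rev Y)"
      using cycle(2) by (cases R1) (simp_all add: X_def)
    show "(u1, z) \<in> E\<^sup>+" using dwalk_Cons_trancl[OF A1] by simp
    show "\<forall>x\<in>set (w # X @ z # rev Y). (x, u1) \<in> E\<^sup>* \<or> (x, u2) \<in> E\<^sup>* \<or> (x, s) \<in> E\<^sup>*"
      using R1_u1 R2_u2 A1_s A2_s unfolding X_def Y_def by auto
  qed simp
qed

lemma deepest_common_ancestor_dwalksE:
  assumes "finite E" "acyclic E" "(r, u1) \<in> E\<^sup>*" "(r, u2) \<in> E\<^sup>*"
    and inc: "(u1, u2) \<notin> E\<^sup>*" "(u2, u1) \<notin> E\<^sup>*"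
  obtains w R1 R2 where "dwalk E (w # R1 @ [u1])" "dwalk E (w # R2 @ [u2])"
    "set (w # R1) \<inter> set (R2 @ [u2]) = {}"
proof -
  define C where "C = {x. (x, u1) \<in> E\<^sup>* \<and> (x, u2) \<in> E\<^sup>*}"
  have "r \<in> C" using assms(3,4) by (simp add: C_def)
  then obtain w where w: "w \<in> C" and deepest: "\<And>y. (w, y) \<in> E\<^sup>+ \<Longrightarrow> y \<notin> C"
    by (rule finite_acyclic_deepestE[OF assms(1,2)]) blast
  have "w \<noteq> u1" "w \<noteq> u2" using w inc by (auto simp: C_def)
  then have "(w, u1) \<in> E\<^sup>+" "(w, u2) \<in> E\<^sup>+" using w by (auto simp: C_def rtrancl_eq_or_trancl)
  then obtain R1 R2 where Q1: "dwalk E (w # R1 @ [u1])" and Q2: "dwalk E (w # R2 @ [u2])"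
    by (elim trancl_dwalkE)
  have "x \<notin> set (R2 @ [u2])" if "x \<in> set (w # R1)" for x
  proof
    assume x: "x \<in> set (R2 @ [u2])"
    have "(x, u1) \<in> E\<^sup>*" using dwalk_rtrancl_last[OF Q1, of x] that by auto
    moreover have "(x, u2) \<in> E\<^sup>*" using dwalk_rtrancl_last[OF Q2] x by simp
    ultimately have "x \<in> C" by (simp add: C_def)
    moreover have "(w, x) \<in> E\<^sup>+" using dwalk_Cons_trancl[OF Q2 x] .
    ultimately show False using deepest by blast
  qed
  then show ?thesis using that[OF Q1 Q2] by blast
qed

lemma is_lca_comparable_eq:
  "is_lca V E S u \<Longrightarrow> is_lca V E S u' \<Longrightarrow> (u, u') \<in> E\<^sup>* \<Longrightarrow> u = u'"
  unfolding is_lca_def by blast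

lemma finite_acyclic_lca_exists:
  assumes "finite E" "acyclic E" "E \<subseteq> V \<times> V" "r \<in> V" "\<forall>v\<in>S. (r, v) \<in> E\<^sup>*"
  shows "\<exists>u. is_lca V E S u"
proof -
  define C where "C = {x \<in> V. \<forall>v\<in>S. (x, v) \<in> E\<^sup>*}"
  have "r \<in> C" using assms(4,5) by (simp add: C_def)
  then obtain m where m: "m \<in> C" and deepest: "\<And>y. (m, y) \<in> E\<^sup>+ \<Longrightarrow> y \<notin> C"
    by (rule finite_acyclic_deepestE[OF assms(1,2)]) blast
  have "(m, y) \<in> E\<^sup>+ \<Longrightarrow> y \<in> V" for y
    using trancl_subset_Sigma[OF assms(3)] by blast
  then have "is_lca V E S m"
    using m deepest unfolding is_lca_def C_def by (auto simp: rtrancl_eq_or_trancl)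
  then show ?thesis ..
qed

lemma cactus_network_finite_acyclic:
  assumes "cactus_network V E"
  shows "finite E" "acyclic E"
proof -
  from assms have "finite V" "E \<subseteq> V \<times> V" "acyclic E" unfolding cactus_network_def by blast+
  then show "finite E" "acyclic E" by (auto intro: finite_subset)
qed

lemma cactus_network_rootE:
  assumes "cactus_network V E"
  obtains r where "r \<in> V" "\<And>v. v \<in> V \<Longrightarrow> (r, v) \<in> E\<^sup>*"
proof -
  from assms obtain r where r: "r \<in> V"
    and source: "\<And>x. x \<in> V \<Longrightarrow> \<nexists>y. (y, x) \<in> E \<Longrightarrow> x = r"
    unfolding cactus_network_def by blast
  have "wf E" using cactus_network_finite_acyclic[OF assms] by (rule finite_acyclic_wf)
  moreover have "E \<subseteq> V \<times> V" using assms unfolding cactus_network_def by blast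
  ultimately show ?thesis using that r source unique_source_rtrancl by metis
qed

lemma cactus_network_cycle_vertices_eq:
  assumes "cactus_network V E" "simple_cycle E c1" "simple_cycle E c2"
    "e \<in> cycle_edges c1" "e \<in> cycle_edges c2"
  shows "set c1 = set c2"
  using assms Union_cycle_edges unfolding cactus_network_def by metis

lemma cactus_network_lca_unique:
  assumes cactus: "cactus_network V E" and "S \<noteq> {}"
    and lca1: "is_lca V E S u1" and lca2: "is_lca V E S u2"
  shows "u1 = u2"
proof (rule ccontr)
  assume "u1 \<noteq> u2"
  then have inc: "(u1, u2) \<notin> E\<^sup>*" "(u2, u1) \<notin> E\<^sup>*"
    using is_lca_comparable_eq lca1 lca2 by metis+
  note fin_acyc = cactus_network_finite_acyclic[OF cactus]
  obtain r where "\<And>v. v \<in> V \<Longrightarrow> (r, v) \<in> E\<^sup>*" by (rule cactus_network_rootE[OF cactus]) blast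
  then have "(r, u1) \<in> E\<^sup>*" "(r, u2) \<in> E\<^sup>*" using lca1 lca2 by (auto simp: is_lca_def)
  then obtain w R1 R2 where Q1: "dwalk E (w # R1 @ [u1])" and Q2: "dwalk E (w # R2 @ [u2])"
    and disj: "set (w # R1) \<inter> set (R2 @ [u2]) = {}"
    by (rule deepest_common_ancestor_dwalksE[OF fin_acyc _ _ inc])
  have below: "(u1, s) \<in> E\<^sup>*" "(u2, s) \<in> E\<^sup>*" if "s \<in> S" for s
    using lca1 lca2 that by (auto simp: is_lca_def)
  obtain s1 where "s1 \<in> S" using \<open>S \<noteq> {}\<close> by blast
  then obtain cs1 z where cs1: "simple_cycle E cs1" "{w, hd (R1 @ [u1])} \<in> cycle_edges cs1"
    and z: "z \<in> set cs1" "(u1, z) \<in> E\<^sup>+"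
    using acyclic_incomparable_simple_cycleE[OF fin_acyc(2) Q1 Q2 disj inc below] by metis
  have "z \<noteq> u1" using z(2) fin_acyc(2) by (auto simp: acyclic_def)
  then obtain s2 where "s2 \<in> S" "(z, s2) \<notin> E\<^sup>*"
    using lca1 z(2) unfolding is_lca_def by (blast dest: trancl_into_rtrancl)
  moreover obtain cs2 where cs2: "simple_cycle E cs2" "{w, hd (R1 @ [u1])} \<in> cycle_edges cs2"
    and "\<forall>x\<in>set cs2. (x, u1) \<in> E\<^sup>* \<or> (x, u2) \<in> E\<^sup>* \<or> (x, s2) \<in> E\<^sup>*"
    using acyclic_incomparable_simple_cycleE[OF fin_acyc(2) Q1 Q2 disj inc below[OF \<open>s2 \<in> S\<close>]] by metis
  moreover have "z \<in> set cs2"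
    using cactus_network_cycle_vertices_eq[OF cactus cs1(1) cs2(1) cs1(2) cs2(2)] z(1) by simp
  moreover have "(z, u1) \<notin> E\<^sup>*"
    using z(2) fin_acyc(2) unfolding acyclic_def by (meson trancl_rtrancl_trancl)
  moreover have "(z, u2) \<notin> E\<^sup>*"
    using z(2) inc(1) by (meson rtrancl_trans trancl_into_rtrancl)
  ultimately show False by blast
qed

theorem lemma4:
  assumes "cactus_network V E"
    and "S \<subseteq> V" and "S \<noteq> {}"
  shows "\<exists>!u. is_lca V E S u"
proof -
  obtain r where "r \<in> V" "\<And>v. v \<in> V \<Longrightarrow> (r, v) \<in> E\<^sup>*"
    by (rule cactus_network_rootE[OF assms(1)]) blast
  moreover have "E \<subseteq> V \<times> V" using assms(1) by (simp add: cactus_network_def)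
  ultimately have "\<exists>u. is_lca V E S u"
    using cactus_network_finite_acyclic[OF assms(1)] assms(2)
    by (intro finite_acyclic_lca_exists) auto
  then show ?thesis using cactus_network_lca_unique[OF assms(1,3)] by blast
qed

end
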